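(* Let $R$ be a proper normed division ring and let $M$ be a Polish $R$-module with $\dim_R(M)$ uncountable. Then there is a nonempty perfect subset of $M$ which is linearly independent over $R$.
   Context: A norm on a ring $R$ is a function $|\cdot|\colon R\to[0,\infty)$ such that $(a,b)\mapsto|a-b|$ is a metric and $|rs|\le|r||s|$; it is proper if every closed ball is compact; a proper normed ring is a ring with a proper norm, topologized by the metric. A division ring is a ring in which every nonzero element has a two-sided inverse. A Polish $R$-module is a topological left $R$-module whose topology is Polish. *)

theory Defs
  imports "HOL-Analysis.Analysis"
begin

definition ring_norm :: "('r::ring \<Rightarrow> real) \<Rightarrow> bool" where
  "ring_norm nr \<longleftrightarrow> (\<forall>a. 0 \<le> nr a) \<and> Metric_space UNIV (\<lambda>a b. nr (a - b))
     \<and> (\<forall>r s. nr (r * s) \<le> nr r * nr s)"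

definition norm_topology :: "('r::ring \<Rightarrow> real) \<Rightarrow> 'r topology" where
  "norm_topology nr = Metric_space.mtopology UNIV (\<lambda>a b. nr (a - b))"

definition proper_ring_norm :: "('r::ring \<Rightarrow> real) \<Rightarrow> bool" where
  "proper_ring_norm nr \<longleftrightarrow> ring_norm nr \<and>
     (\<forall>a e. compactin (norm_topology nr) (Metric_space.mcball UNIV (\<lambda>a b. nr (a - b)) a e))"

definition left_module :: "('r::ring_1 \<Rightarrow> 'm::ab_group_add \<Rightarrow> 'm) \<Rightarrow> bool" where
  "left_module smul \<longleftrightarrow>
     (\<forall>r x y. smul r (x + y) = smul r x + smul r y) \<and>
     (\<forall>r s x. smul (r + s) x = smul r x + smul s x) \<and>
     (\<forall>r s x. smul (r * s) x = smul r (smul s x)) \<and>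
     (\<forall>x. smul 1 x = x)"

definition topological_left_module ::
  "('r::ring_1 \<Rightarrow> real) \<Rightarrow> ('r \<Rightarrow> 'm::ab_group_add \<Rightarrow> 'm) \<Rightarrow> 'm topology \<Rightarrow> bool" where
  "topological_left_module nr smul T \<longleftrightarrow> left_module smul \<and> topspace T = UNIV \<and>
     continuous_map (prod_topology T T) T (\<lambda>(x, y). x + y) \<and>
     continuous_map (prod_topology (norm_topology nr) T) T (\<lambda>(r, x). smul r x)"

definition Polish_space :: "'a topology \<Rightarrow> bool" where
  "Polish_space T \<longleftrightarrow> completely_metrizable_space T \<and> separable_space T"

definition lin_indep :: "('r::ring_1 \<Rightarrow> 'm::ab_group_add \<Rightarrow> 'm) \<Rightarrow> 'm set \<Rightarrow> bool" where
  "lin_indep smul A \<longleftrightarrow> (\<forall>S c. finite S \<and> S \<subseteq> A \<and> (\<Sum>x\<in>S. smul (c x) x) = 0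
      \<longrightarrow> (\<forall>x\<in>S. c x = 0))"

definition lin_span :: "('r::ring_1 \<Rightarrow> 'm::ab_group_add \<Rightarrow> 'm) \<Rightarrow> 'm set \<Rightarrow> 'm set" where
  "lin_span smul A = {y. \<exists>S c. finite S \<and> S \<subseteq> A \<and> y = (\<Sum>x\<in>S. smul (c x) x)}"

definition is_basis :: "('r::ring_1 \<Rightarrow> 'm::ab_group_add \<Rightarrow> 'm) \<Rightarrow> 'm set \<Rightarrow> bool" where
  "is_basis smul B \<longleftrightarrow> lin_indep smul B \<and> lin_span smul B = UNIV"

text \<open>dim_R(M) is the cardinality of a basis (well defined over a division ring);
  "dim uncountable" means M has an uncountable basis.\<close>
definition uncountable_dim :: "('r::ring_1 \<Rightarrow> 'm::ab_group_add \<Rightarrow> 'm) \<Rightarrow> bool" where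
  "uncountable_dim smul \<longleftrightarrow> (\<exists>B. is_basis smul B \<and> uncountable B)"

definition perfect_set :: "'a topology \<Rightarrow> 'a set \<Rightarrow> bool" where
  "perfect_set T P \<longleftrightarrow> closedin T P \<and> T derived_set_of P = P"

end

theory Submission
  imports Defs
begin

(*
  Call a point of M thick if none of its neighbourhoods lies in the span of a countable set.
  By second countability the set of non-thick points is covered by countably many countably
  spanned open sets; as dim M is uncountable, thick points exist, and no open set containing a
  thick point has its thick points inside a countably generated subspace.  Hence finitely many
  open sets meeting the thick points contain linearly independent thick points, one in each.

  Linear independence of N points is stable under small perturbations, uniformly for
  coefficients in the annulus {c. \<forall>j. |c j| \<le> m, \<exists>j. |c j| \<ge> 1/m}: this set is compact
  because the norm of R is proper, so the tuples admitting a relation with such coefficients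
  form a closed set.  Iterating both facts yields a Cantor scheme of closed balls: at level n
  there are 2^n disjoint balls of radius at most 2^-n, each splitting into two at level n + 1,
  such that no choice of one point per ball satisfies a linear relation with coefficients in
  the n-th annulus.  By completeness the points lying in a ball of every level form a nonempty
  perfect set, and it is linearly independent: a nontrivial relation among finitely many of
  its points has coefficients in some annulus and separates the points into distinct balls at
  a late enough level.
*)

definition lin_indep_seq :: "('r::ring_1 \<Rightarrow> 'm::ab_group_add \<Rightarrow> 'm) \<Rightarrow> nat \<Rightarrow> (nat \<Rightarrow> 'm) \<Rightarrow> bool" where
  "lin_indep_seq smul N q \<longleftrightarrow> (\<forall>c. (\<Sum>j<N. smul (c j) (q j)) = 0 \<longrightarrow> (\<forall>j<N. c j = 0))"

lemma lin_indep_seq_cong: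
  assumes "\<And>j. j < N \<Longrightarrow> q j = q' j"
  shows "lin_indep_seq smul N q \<longleftrightarrow> lin_indep_seq smul N q'"
proof -
  have "(\<Sum>j<N. smul (c j) (q j)) = (\<Sum>j<N. smul (c j) (q' j))" for c
    using assms by (intro sum.cong) auto
  then show ?thesis unfolding lin_indep_seq_def by simp
qed

locale lmodule =
  fixes smul :: "'r::ring_1 \<Rightarrow> 'm::ab_group_add \<Rightarrow> 'm"
  assumes left_module: "left_module smul"
begin

lemma smul_add_right: "smul r (x + y) = smul r x + smul r y"
  and smul_add_left: "smul (r + s) x = smul r x + smul s x"
  and smul_mult: "smul (r * s) x = smul r (smul s x)"
  and smul_one: "smul 1 x = x"
  using left_module by (simp_all add: left_module_def)

lemma smul_zero_right: "smul r 0 = 0"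
  using smul_add_right[of r 0 0] by simp

lemma smul_zero_left: "smul 0 x = 0"
  using smul_add_left[of 0 0 x] by simp

lemma smul_minus_left: "smul (- r) x = - smul r x"
  using smul_add_left[of r "- r" x] by (simp add: smul_zero_left add_eq_0_iff)

lemma smul_minus_right: "smul r (- x) = - smul r x"
  using smul_add_right[of r x "- x"] by (simp add: smul_zero_right add_eq_0_iff)

lemma smul_sum_right: "smul r (\<Sum>i\<in>S. f i) = (\<Sum>i\<in>S. smul r (f i))"
  by (induction S rule: infinite_finite_induct) (auto simp: smul_zero_right smul_add_right)

lemma lin_spanI:
  "finite S \<Longrightarrow> S \<subseteq> A \<Longrightarrow> y = (\<Sum>x\<in>S. smul (c x) x) \<Longrightarrow> y \<in> lin_span smul A"
  unfolding lin_span_def by blast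

lemma lin_spanE:
  assumes "y \<in> lin_span smul A"
  obtains S c where "finite S" "S \<subseteq> A" "y = (\<Sum>x\<in>S. smul (c x) x)"
  using assms unfolding lin_span_def by blast

lemma lin_span_superset: "A \<subseteq> lin_span smul A"
proof
  fix x assume "x \<in> A"
  show "x \<in> lin_span smul A"
    by (rule lin_spanI[where S = "{x}" and c = "\<lambda>_. 1"]) (simp_all add: smul_one \<open>x \<in> A\<close>)
qed

lemma lin_span_mono: "A \<subseteq> B \<Longrightarrow> lin_span smul A \<subseteq> lin_span smul B"
  unfolding lin_span_def by blast

lemma lincomb_extend_zero:
  assumes "finite T" "S \<subseteq> T"
  shows "(\<Sum>x\<in>T. smul (if x \<in> S then c x else 0) x) = (\<Sum>x\<in>S. smul (c x) x)"
proof -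
  have "(\<Sum>x\<in>T. smul (if x \<in> S then c x else 0) x) = (\<Sum>x\<in>T. if x \<in> S then smul (c x) x else 0)"
    by (rule sum.cong) (simp_all add: smul_zero_left)
  also have "\<dots> = (\<Sum>x\<in>S. smul (c x) x)"
    using assms by (simp add: sum.inter_restrict[symmetric] Int_absorb1)
  finally show ?thesis .
qed

lemma lin_span_add:
  assumes "a \<in> lin_span smul A" "b \<in> lin_span smul A"
  shows "a + b \<in> lin_span smul A"
proof -
  obtain S1 c1 where S1: "finite S1" "S1 \<subseteq> A" "a = (\<Sum>x\<in>S1. smul (c1 x) x)"
    using assms(1) by (rule lin_spanE)
  obtain S2 c2 where S2: "finite S2" "S2 \<subseteq> A" "b = (\<Sum>x\<in>S2. smul (c2 x) x)"
    using assms(2) by (rule lin_spanE)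
  let ?c = "\<lambda>x. (if x \<in> S1 then c1 x else 0) + (if x \<in> S2 then c2 x else 0)"
  have "(\<Sum>x\<in>S1 \<union> S2. smul (?c x) x)
      = (\<Sum>x\<in>S1 \<union> S2. smul (if x \<in> S1 then c1 x else 0) x)
        + (\<Sum>x\<in>S1 \<union> S2. smul (if x \<in> S2 then c2 x else 0) x)"
    by (simp only: smul_add_left sum.distrib)
  also have "\<dots> = a + b"
    using S1 S2 lincomb_extend_zero[of "S1 \<union> S2" S1 c1] lincomb_extend_zero[of "S1 \<union> S2" S2 c2]
    by simp
  finally have sum: "a + b = (\<Sum>x\<in>S1 \<union> S2. smul (?c x) x)" ..
  show ?thesis
    by (rule lin_spanI[OF _ _ sum]) (use S1 S2 in auto)
qed

lemma lin_span_smul: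
  assumes "a \<in> lin_span smul A"
  shows "smul r a \<in> lin_span smul A"
proof -
  obtain S c where S: "finite S" "S \<subseteq> A" "a = (\<Sum>x\<in>S. smul (c x) x)"
    using assms by (rule lin_spanE)
  then have "smul r a = (\<Sum>x\<in>S. smul (r * c x) x)"
    by (simp add: smul_sum_right smul_mult)
  then show ?thesis
    by (rule lin_spanI[OF S(1,2)])
qed

lemma lin_span_lincomb:
  assumes "finite J" "f ` J \<subseteq> lin_span smul A"
  shows "(\<Sum>j\<in>J. smul (e j) (f j)) \<in> lin_span smul A"
  using assms
proof (induction J rule: finite_induct)
  case empty
  show ?case by (rule lin_spanI[of "{}" A]) simp_all
qed (auto intro!: lin_span_add lin_span_smul)

lemma lin_span_lin_span: "lin_span smul (lin_span smul A) = lin_span smul A"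
proof
  show "lin_span smul (lin_span smul A) \<subseteq> lin_span smul A"
  proof
    fix y assume "y \<in> lin_span smul (lin_span smul A)"
    then obtain S c where "finite S" "S \<subseteq> lin_span smul A" "y = (\<Sum>x\<in>S. smul (c x) (id x))"
      by (auto elim: lin_spanE)
    then show "y \<in> lin_span smul A"
      using lin_span_lincomb[of S id A c] by simp
  qed
qed (rule lin_span_superset)

lemma lin_span_finite_support:
  assumes "y \<in> lin_span smul A"
  obtains F where "finite F" "F \<subseteq> A" "y \<in> lin_span smul F"
  using assms by (metis lin_spanE lin_spanI subset_refl)

lemma lin_indep_notin_lin_span:
  assumes "lin_indep smul B" "W \<subseteq> B" "b \<in> B" "b \<notin> W"
  shows "b \<notin> lin_span smul W"
proof
  assume "b \<in> lin_span smul W"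
  then obtain S c where S: "finite S" "S \<subseteq> W" "b = (\<Sum>x\<in>S. smul (c x) x)"
    by (rule lin_spanE)
  have bS: "b \<notin> S" using S(2) assms(4) by blast
  let ?c = "c(b := - 1)"
  have "(\<Sum>x\<in>S. smul (?c x) x) = b"
    using bS S(3) by (auto intro: sum.cong)
  then have "(\<Sum>x\<in>insert b S. smul (?c x) x) = 0"
    using S(1) bS by (simp add: smul_minus_left smul_one)
  moreover have "finite (insert b S)" "insert b S \<subseteq> B"
    using S(1,2) assms(2,3) by auto
  ultimately have "?c b = 0"
    using assms(1) unfolding lin_indep_def by blast
  then show False by simp
qed

lemma countable_lin_span_neq_UNIV:
  assumes "uncountable_dim smul" "countable C"
  shows "lin_span smul C \<noteq> UNIV"
proof
  assume C: "lin_span smul C = UNIV"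
  obtain B where B: "is_basis smul B" "uncountable B"
    using assms(1) unfolding uncountable_dim_def by blast
  have "\<forall>x\<in>C. \<exists>F. finite F \<and> F \<subseteq> B \<and> x \<in> lin_span smul F"
    using B(1) unfolding is_basis_def by (metis UNIV_I lin_span_finite_support)
  then obtain F where F: "\<And>x. x \<in> C \<Longrightarrow> finite (F x) \<and> F x \<subseteq> B \<and> x \<in> lin_span smul (F x)"
    by metis
  define W where "W = (\<Union>x\<in>C. F x)"
  have "countable W"
    unfolding W_def using assms(2) F by (intro countable_UN) (auto intro: countable_finite)
  then obtain b where b: "b \<in> B" "b \<notin> W"
    using B(2) countable_subset[of B W] by blast
  have "C \<subseteq> lin_span smul W"
  proof
    fix x assume "x \<in> C"
    then have "F x \<subseteq> W" "x \<in> lin_span smul (F x)" using F unfolding W_def by auto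
    then show "x \<in> lin_span smul W" using lin_span_mono by blast
  qed
  then have "lin_span smul C \<subseteq> lin_span smul W"
    using lin_span_mono[of C "lin_span smul W"] lin_span_lin_span[of W] by simp
  then have "b \<in> lin_span smul W" using C by blast
  moreover have "W \<subseteq> B" unfolding W_def using F by blast
  ultimately show False
    using lin_indep_notin_lin_span[of B W b] B(1) b unfolding is_basis_def by simp
qed

lemma lin_indep_seq_inj_on:
  assumes "lin_indep_seq smul N q"
  shows "inj_on q {..<N}"
proof
  fix i j assume ij: "i \<in> {..<N}" "j \<in> {..<N}" "q i = q j"
  show "i = j"
  proof (rule ccontr)
    assume "i \<noteq> j"
    define c :: "nat \<Rightarrow> 'r" where "c k = (if k = i then 1 else if k = j then - 1 else 0)" for k
    have "(\<Sum>k<N. smul (c k) (q k)) = (\<Sum>k\<in>{i, j}. smul (c k) (q k))"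
      using ij by (intro sum.mono_neutral_right) (auto simp: c_def smul_zero_left)
    also have "\<dots> = 0"
      using \<open>i \<noteq> j\<close> ij(3) by (simp add: c_def smul_minus_left smul_one)
    finally have "c i = 0"
      using assms ij(1) unfolding lin_indep_seq_def by blast
    then show False by (simp add: c_def)
  qed
qed

end

locale division_lmodule = lmodule smul
  for smul :: "'r::division_ring \<Rightarrow> 'm::ab_group_add \<Rightarrow> 'm"
begin

lemma lin_indep_seq_Suc:
  assumes indep: "lin_indep_seq smul N q"
    and new: "q N \<notin> lin_span smul (q ` {..<N})"
  shows "lin_indep_seq smul (Suc N) q"
  unfolding lin_indep_seq_def
proof (rule allI, rule impI)
  fix c assume "(\<Sum>j<Suc N. smul (c j) (q j)) = 0"
  then have sum: "smul (c N) (q N) = - (\<Sum>j<N. smul (c j) (q j))"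
    by (simp add: eq_neg_iff_add_eq_0 add.commute)
  have "c N = 0"
  proof (rule ccontr)
    assume "c N \<noteq> 0"
    then have "q N = smul (inverse (c N)) (smul (c N) (q N))"
      by (simp add: smul_mult[symmetric] smul_one)
    also have "\<dots> = (\<Sum>j<N. smul (- inverse (c N) * c j) (q j))"
      unfolding sum by (simp add: smul_minus_right smul_minus_left smul_sum_right smul_mult sum_negf)
    also have "\<dots> \<in> lin_span smul (q ` {..<N})"
      by (rule lin_span_lincomb) (auto intro: lin_span_superset[THEN subsetD])
    finally show False using new by contradiction
  qed
  then have "(\<Sum>j<N. smul (c j) (q j)) = 0"
    using sum by (simp add: smul_zero_left)
  then show "\<forall>j<Suc N. c j = 0"
    using indep \<open>c N = 0\<close> unfolding lin_indep_seq_def by (auto simp: less_Suc_eq)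
qed

end

lemma continuous_map_finite_sum:
  fixes T :: "'a::comm_monoid_add topology"
  assumes "continuous_map (prod_topology T T) T (\<lambda>(x, y). x + y)" "topspace T = UNIV"
    and "finite J" "\<And>j. j \<in> J \<Longrightarrow> continuous_map Z T (f j)"
  shows "continuous_map Z T (\<lambda>z. \<Sum>j\<in>J. f j z)"
  using assms(3,4)
proof (induction J rule: finite_induct)
  case empty
  then show ?case by (simp add: assms(2))
next
  case (insert x F)
  have "continuous_map Z T ((\<lambda>(x, y). x + y) \<circ> (\<lambda>z. (f x z, \<Sum>j\<in>F. f j z)))"
    using insert by (intro continuous_map_compose[OF continuous_map_pairedI assms(1)]) auto
  then show ?case using insert by (simp add: o_def)
qed

context Metric_space
begin

lemma separable_imp_second_countable:
  assumes "separable_space mtopology"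
  shows "second_countable mtopology"
proof -
  obtain D where D: "countable D" "mtopology closure_of D = M"
    using assms unfolding separable_space_def by auto
  define \<B> where "\<B> = (\<lambda>(a, n). mball a (inverse (Suc n))) ` (D \<times> (UNIV :: nat set))"
  have "\<exists>V\<in>\<B>. x \<in> V \<and> V \<subseteq> U" if U: "openin mtopology U" "x \<in> U" for U x
  proof -
    obtain r where r: "r > 0" "mball x r \<subseteq> U"
      using U openin_mtopology by blast
    obtain n :: nat where n: "inverse (Suc n) < r / 2"
      using reals_Archimedean[of "r / 2"] r(1) by auto
    have x: "x \<in> M" using U openin_subset by fastforce
    then have "x \<in> mtopology closure_of D" using D(2) by simp
    moreover have "inverse (real (Suc n)) > 0" by simp
    ultimately obtain y where y: "y \<in> D" "y \<in> mball x (inverse (Suc n))"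
      unfolding metric_closure_of by blast
    have "mball y (inverse (Suc n)) \<subseteq> mball x r"
    proof
      fix z assume "z \<in> mball y (inverse (Suc n))"
      then show "z \<in> mball x r"
        using x y(2) n triangle[of x y z] by simp
    qed
    moreover have "x \<in> mball y (inverse (Suc n))"
      using y(2) commute[of x y] by simp
    moreover have "mball y (inverse (Suc n)) \<in> \<B>"
      unfolding \<B>_def using y(1) by (intro image_eqI[of _ _ "(y, n)"]) simp_all
    ultimately show ?thesis using r(2) by blast
  qed
  moreover have "countable \<B>" "\<forall>V\<in>\<B>. openin mtopology V"
    unfolding \<B>_def using D(1) by auto
  ultimately show ?thesis
    unfolding second_countable_def by blast
qed

lemma obtain_disjoint_mcballs:
  assumes "finite I" "inj_on q I" "q ` I \<subseteq> M"
  obtains \<delta> where "\<delta> > 0"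
    "\<And>i j. i \<in> I \<Longrightarrow> j \<in> I \<Longrightarrow> i \<noteq> j \<Longrightarrow> mcball (q i) \<delta> \<inter> mcball (q j) \<delta> = {}"
proof
  define D where "D = (\<lambda>(i, j). d (q i) (q j)) ` (I \<times> I - {(i, j). i = j})"
  have "finite D" unfolding D_def using assms(1) by simp
  moreover have "0 < d (q i) (q j)" if "i \<in> I" "j \<in> I" "i \<noteq> j" for i j
  proof -
    have "q i \<noteq> q j" using assms(2) that by (auto simp: inj_on_def)
    then have "d (q i) (q j) \<noteq> 0"
      using assms(3) that zero[of "q i" "q j"] by (auto simp: image_subset_iff)
    then show ?thesis using nonneg[of "q i" "q j"] by linarith
  qed
  then have "\<forall>x\<in>D. 0 < x" unfolding D_def by auto
  ultimately have D: "finite D" "\<forall>x\<in>D. 0 < x" .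
  define \<delta> where "\<delta> = (if D = {} then 1 else Min D / 3)"
  show "\<delta> > 0" unfolding \<delta>_def using D by auto
  fix i j assume ij: "i \<in> I" "j \<in> I" "i \<noteq> j"
  have "d (q i) (q j) \<in> D" unfolding D_def using ij by force
  then have far: "3 * \<delta> \<le> d (q i) (q j)" unfolding \<delta>_def using D by auto
  show "mcball (q i) \<delta> \<inter> mcball (q j) \<delta> = {}"
  proof (rule ccontr)
    assume "mcball (q i) \<delta> \<inter> mcball (q j) \<delta> \<noteq> {}"
    then obtain x where x: "x \<in> M" "d (q i) x \<le> \<delta>" "d (q j) x \<le> \<delta>" by auto
    have "d (q i) (q j) \<le> d (q i) x + d x (q j)"
      using x(1) assms(3) ij by (intro triangle) auto
    also have "\<dots> \<le> 2 * \<delta>"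
      using x commute[of x "q j"] assms(3) ij by simp
    finally show False using far \<open>\<delta> > 0\<close> by simp
  qed
qed

lemma open_product_contains_uniform_mcball:
  assumes "openin (product_topology (\<lambda>_. mtopology) I) U" "x \<in> U" "finite I"
  shows "\<exists>\<epsilon>>0. \<forall>y\<in>extensional I. (\<forall>i\<in>I. y i \<in> mcball (x i) \<epsilon>) \<longrightarrow> y \<in> U"
proof -
  obtain V where V: "\<forall>i\<in>I. openin mtopology (V i)" "x \<in> PiE I V" "PiE I V \<subseteq> U"
    using assms(1,2) unfolding openin_product_topology_alt by blast
  have "\<forall>i\<in>I. \<exists>r>0. mball (x i) r \<subseteq> V i"
    using V(1,2) openin_mtopology by (metis PiE_mem)
  then obtain r where r: "\<And>i. i \<in> I \<Longrightarrow> r i > 0 \<and> mball (x i) (r i) \<subseteq> V i"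
    by metis
  define \<epsilon> where "\<epsilon> = (if I = {} then 1 else Min (r ` I) / 2)"
  have "\<epsilon> > 0" unfolding \<epsilon>_def using assms(3) r by auto
  moreover have "y \<in> U" if y: "y \<in> extensional I" "\<forall>i\<in>I. y i \<in> mcball (x i) \<epsilon>" for y
  proof -
    have "y i \<in> V i" if "i \<in> I" for i
    proof -
      have "Min (r ` I) \<le> r i" using assms(3) that by simp
      moreover have "0 < Min (r ` I)" using assms(3) r that by (subst Min_gr_iff) auto
      ultimately have "\<epsilon> < r i" unfolding \<epsilon>_def using that by auto
      then show ?thesis using y(2) that r[OF that] by fastforce
    qed
    then show ?thesis using y(1) V(3) by (auto simp: PiE_def)
  qed
  ultimately show ?thesis by blast
qed

end

locale metric_module =
  Metric_space "UNIV :: 'm set" d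
  for d :: "'m::ab_group_add \<Rightarrow> 'm \<Rightarrow> real" +
  fixes nr :: "'r::division_ring \<Rightarrow> real" and smul :: "'r \<Rightarrow> 'm \<Rightarrow> 'm"
  assumes proper_ring_norm: "proper_ring_norm nr"
    and topological_left_module: "topological_left_module nr smul mtopology"

sublocale metric_module \<subseteq> R: Metric_space "UNIV :: 'r set" "\<lambda>a b. nr (a - b)"
  using proper_ring_norm unfolding proper_ring_norm_def ring_norm_def by auto

sublocale metric_module \<subseteq> division_lmodule smul
  using topological_left_module by unfold_locales (simp add: topological_left_module_def)

context metric_module
begin

lemma continuous_map_add: "continuous_map (prod_topology mtopology mtopology) mtopology (\<lambda>(x, y). x + y)"
  and continuous_map_smul: "continuous_map (prod_topology R.mtopology mtopology) mtopology (\<lambda>(r, x). smul r x)"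
  using topological_left_module by (simp_all add: topological_left_module_def norm_topology_def)

lemma compactin_ring_mcball: "compactin R.mtopology (R.mcball a e)"
  using proper_ring_norm by (simp add: proper_ring_norm_def norm_topology_def)

lemma norm_minus: "nr (- a) = nr a"
  using R.commute[of 0 a] by simp

lemma norm_eq_zero_iff: "nr a = 0 \<longleftrightarrow> a = 0"
  using R.zero[of a 0] by simp

lemma norm_nonneg: "0 \<le> nr a"
  using R.nonneg[of a 0] by simp

(* The conjunct c j \<noteq> 0 only matters for m = 0, where 1 / m = 0 in HOL; it makes that annulus empty. *)
definition coeff_annulus :: "nat \<Rightarrow> nat \<Rightarrow> (nat \<Rightarrow> 'r) set" where
  "coeff_annulus m N = {c. (\<forall>j<N. nr (c j) \<le> m) \<and> (\<exists>j<N. 1 / m \<le> nr (c j) \<and> c j \<noteq> 0)}"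

lemma coeff_annulus_0: "coeff_annulus 0 N = {}"
proof (rule equals0I)
  fix c assume "c \<in> coeff_annulus 0 N"
  then obtain j where j: "j < N" "c j \<noteq> 0" and bound: "\<forall>i<N. nr (c i) \<le> 0"
    by (auto simp: coeff_annulus_def)
  have "nr (c j) \<le> 0" using bound j(1) by blast
  then have "nr (c j) = 0" using norm_nonneg[of "c j"] by linarith
  then show False using j(2) norm_eq_zero_iff by simp
qed

lemma coeff_annulus_eq:
  assumes "0 < m"
  shows "coeff_annulus m N \<inter> extensional {..<N}
    = PiE {..<N} (\<lambda>_. R.mcball 0 m) \<inter> {c. \<exists>j<N. 1 / m \<le> nr (c j)}"
proof -
  have nonzero: "a \<noteq> 0" if "1 / m \<le> nr a" for a
  proof -
    have "0 < 1 / real m" using assms by simp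
    then have "0 < nr a" using that by linarith
    then show ?thesis using norm_eq_zero_iff[of a] by auto
  qed
  have PiE_ball_iff: "c \<in> PiE {..<N} (\<lambda>_. R.mcball 0 m) \<longleftrightarrow>
      c \<in> extensional {..<N} \<and> (\<forall>j<N. nr (c j) \<le> m)" for c
    by (simp add: PiE_iff norm_minus Ball_def lessThan_iff conj_commute)
  have annulus_iff: "c \<in> coeff_annulus m N \<longleftrightarrow> (\<forall>j<N. nr (c j) \<le> m) \<and> (\<exists>j<N. 1 / m \<le> nr (c j))" for c
    using nonzero unfolding coeff_annulus_def by auto
  show ?thesis
    by (rule set_eqI) (simp only: Int_iff PiE_ball_iff annulus_iff mem_Collect_eq, blast)
qed

lemma compactin_coeff_annulus:
  "compactin (product_topology (\<lambda>_. R.mtopology) {..<N}) (coeff_annulus m N \<inter> extensional {..<N})"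
proof (cases "m = 0")
  case False
  define PR where "PR = product_topology (\<lambda>_. R.mtopology) {..<N}"
  have "closedin R.mtopology (UNIV - R.mball 0 (1 / m))"
    by (intro closedin_diff) auto
  then have "closedin PR {c \<in> topspace PR. c j \<in> UNIV - R.mball 0 (1 / m)}" if "j < N" for j
    unfolding PR_def using that
    by (intro closedin_continuous_map_preimage[OF continuous_map_product_projection]) auto
  then have "closedin PR (\<Union>j<N. {c \<in> topspace PR. c j \<in> UNIV - R.mball 0 (1 / m)})"
    by (intro closedin_Union) auto
  moreover have "compactin PR (PiE {..<N} (\<lambda>_. R.mcball 0 m))"
    unfolding PR_def compactin_PiE using compactin_ring_mcball by auto
  ultimately have "compactin PR
      ((\<Union>j<N. {c \<in> topspace PR. c j \<in> UNIV - R.mball 0 (1 / m)}) \<inter> PiE {..<N} (\<lambda>_. R.mcball 0 m))"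
    by (rule closed_Int_compactin)
  moreover have "(\<Union>j<N. {c \<in> topspace PR. c j \<in> UNIV - R.mball 0 (1 / m)}) \<inter> PiE {..<N} (\<lambda>_. R.mcball 0 m)
      = PiE {..<N} (\<lambda>_. R.mcball 0 m) \<inter> {c. \<exists>j<N. 1 / m \<le> nr (c j)}"
  proof -
    have "topspace PR = extensional {..<N}"
      unfolding PR_def by (simp add: PiE_def)
    then have union_iff: "c \<in> (\<Union>j<N. {c \<in> topspace PR. c j \<in> UNIV - R.mball 0 (1 / m)}) \<longleftrightarrow>
        c \<in> extensional {..<N} \<and> (\<exists>j<N. 1 / m \<le> nr (c j))" for c
      using norm_minus by (auto simp: not_less)
    have "c \<in> extensional {..<N}" if "c \<in> PiE {..<N} X" for c X
      using that by (simp add: PiE_iff)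
    then show ?thesis
      by (intro set_eqI) (simp only: Int_iff union_iff mem_Collect_eq, blast)
  qed
  ultimately show ?thesis
    unfolding PR_def coeff_annulus_eq[OF \<open>m \<noteq> 0\<close>[unfolded neq0_conv]] by simp
qed (simp add: coeff_annulus_0)

lemma obtain_coeff_bound:
  assumes "finite S" "x0 \<in> S" "c x0 \<noteq> 0"
  obtains m :: nat where "0 < m" "\<And>x. x \<in> S \<Longrightarrow> nr (c x) \<le> m" "1 / m \<le> nr (c x0)"
proof -
  have pos: "0 < nr (c x0)"
    using assms(3) norm_nonneg[of "c x0"] norm_eq_zero_iff[of "c x0"] by linarith
  define B where "B = Max ((\<lambda>x. nr (c x)) ` S) + 1 / nr (c x0) + 1"
  define m where "m = nat \<lceil>B\<rceil>"
  have "nr (c x) \<le> Max ((\<lambda>x. nr (c x)) ` S)" if "x \<in> S" for x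
    using assms(1) that by simp
  moreover have "0 \<le> Max ((\<lambda>x. nr (c x)) ` S)"
    using calculation[OF assms(2)] pos by linarith
  moreover have "B \<le> m" unfolding m_def by (rule real_nat_ceiling_ge)
  moreover have "0 < 1 / nr (c x0)" using pos by simp
  ultimately have bound: "\<And>x. x \<in> S \<Longrightarrow> nr (c x) \<le> m" and "1 / nr (c x0) \<le> m" and "1 \<le> real m"
    unfolding B_def by (smt (verit))+
  then have "1 / m \<le> nr (c x0)"
    using pos by (simp add: divide_le_eq mult.commute)
  moreover have "0 < m" using \<open>1 \<le> real m\<close> by simp
  ultimately show ?thesis using that bound by blast
qed

lemma continuous_map_lincomb:
  fixes N :: nat
  shows "continuous_map
     (prod_topology (product_topology (\<lambda>_. mtopology) {..<N}) (product_topology (\<lambda>_. R.mtopology) {..<N}))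
     mtopology (\<lambda>(y, c). \<Sum>j<N. smul (c j) (y j))"
    (is "continuous_map ?P _ _")
proof -
  have "continuous_map ?P mtopology (\<lambda>z. smul (snd z j) (fst z j))" if "j < N" for j
  proof -
    have "continuous_map (product_topology (\<lambda>_. R.mtopology) {..<N}) R.mtopology (\<lambda>c. c j)"
      by (rule continuous_map_product_projection) (use that in simp)
    then have "continuous_map ?P R.mtopology ((\<lambda>c. c j) \<circ> snd)"
      by (rule continuous_map_compose[OF continuous_map_snd])
    then have coeff: "continuous_map ?P R.mtopology (\<lambda>z. snd z j)"
      by (simp add: o_def)
    have "continuous_map (product_topology (\<lambda>_. mtopology) {..<N}) mtopology (\<lambda>y. y j)"
      by (rule continuous_map_product_projection) (use that in simp)
    then have "continuous_map ?P mtopology ((\<lambda>y. y j) \<circ> fst)"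
      by (rule continuous_map_compose[OF continuous_map_fst])
    then have vec: "continuous_map ?P mtopology (\<lambda>z. fst z j)"
      by (simp add: o_def)
    have "continuous_map ?P mtopology ((\<lambda>(r, x). smul r x) \<circ> (\<lambda>z. (snd z j, fst z j)))"
      by (rule continuous_map_compose[OF continuous_map_pairedI[OF coeff vec] continuous_map_smul])
    then show ?thesis by (simp add: o_def)
  qed
  then have "continuous_map ?P mtopology (\<lambda>z. \<Sum>j<N. smul (snd z j) (fst z j))"
    by (intro continuous_map_finite_sum[OF continuous_map_add]) auto
  then show ?thesis by (simp add: case_prod_unfold)
qed

(* Projection of the closed zero set of (y, c) \<mapsto> \<Sum>j. c j y j along the compact annulus factor. *)
lemma closedin_dependent_tuples:
  fixes N :: nat
  shows "closedin (product_topology (\<lambda>_. mtopology) {..<N})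
    {y \<in> extensional {..<N}. \<exists>c\<in>coeff_annulus m N. (\<Sum>j<N. smul (c j) (y j)) = 0}"
proof -
  define PT where "PT = product_topology (\<lambda>_. mtopology) {..<N}"
  define PR where "PR = product_topology (\<lambda>_. R.mtopology) {..<N}"
  define K where "K = coeff_annulus m N \<inter> extensional {..<N}"
  define Y where "Y = prod_topology PT (subtopology PR K)"
  define Z where "Z = {z \<in> topspace Y. (\<lambda>(y, c). \<Sum>j<N. smul (c j) (y j)) z \<in> {0}}"
  have top: "topspace PT = extensional {..<N}" "topspace PR = extensional {..<N}"
    unfolding PT_def PR_def by (simp_all add: PiE_def)
  have "Y = subtopology (prod_topology PT PR) (topspace PT \<times> K)"
    unfolding Y_def by (simp add: subtopology_Times)
  then have "continuous_map Y mtopology (\<lambda>(y, c). \<Sum>j<N. smul (c j) (y j))"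
    unfolding PT_def PR_def by (simp add: continuous_map_from_subtopology continuous_map_lincomb)
  then have "closedin Y Z"
    unfolding Z_def
    by (rule closedin_continuous_map_preimage[OF _ closedin_Hausdorff_singleton[OF Hausdorff_space_mtopology]]) simp
  moreover have "closed_map Y PT fst"
    unfolding Y_def PR_def K_def
    by (intro closed_map_fst compact_space_subtopology compactin_coeff_annulus)
  ultimately have "closedin PT (fst ` Z)"
    unfolding closed_map_def by blast
  moreover have "fst ` Z = {y \<in> extensional {..<N}. \<exists>c\<in>coeff_annulus m N. (\<Sum>j<N. smul (c j) (y j)) = 0}"
  proof (intro equalityI subsetI)
    fix y assume "y \<in> fst ` Z"
    then obtain c where "(y, c) \<in> Z" by auto
    then show "y \<in> {y \<in> extensional {..<N}. \<exists>c\<in>coeff_annulus m N. (\<Sum>j<N. smul (c j) (y j)) = 0}"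
      unfolding Z_def Y_def K_def by (auto simp: topspace_subtopology top)
  next
    fix y assume "y \<in> {y \<in> extensional {..<N}. \<exists>c\<in>coeff_annulus m N. (\<Sum>j<N. smul (c j) (y j)) = 0}"
    then obtain c where y: "y \<in> extensional {..<N}" "c \<in> coeff_annulus m N"
      "(\<Sum>j<N. smul (c j) (y j)) = 0" by blast
    have "restrict c {..<N} \<in> K"
      using y(2) unfolding K_def coeff_annulus_def by auto
    moreover have "(\<Sum>j<N. smul (restrict c {..<N} j) (y j)) = (\<Sum>j<N. smul (c j) (y j))"
      by (rule sum.cong) simp_all
    ultimately have "(y, restrict c {..<N}) \<in> Z"
      using y unfolding Z_def Y_def by (auto simp: topspace_subtopology top K_def)
    then show "y \<in> fst ` Z" by force
  qed
  ultimately show ?thesis unfolding PT_def by simp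
qed

lemma lin_indep_seq_stable:
  assumes indep: "lin_indep_seq smul N q"
  obtains \<epsilon> where "\<epsilon> > 0"
    "\<And>y c. (\<And>j. j < N \<Longrightarrow> d (q j) (y j) \<le> \<epsilon>) \<Longrightarrow> c \<in> coeff_annulus m N \<Longrightarrow>
      (\<Sum>j<N. smul (c j) (y j)) \<noteq> 0"
proof -
  define PT where "PT = product_topology (\<lambda>_. mtopology) {..<N}"
  define D where "D = {y \<in> extensional {..<N}. \<exists>c\<in>coeff_annulus m N. (\<Sum>j<N. smul (c j) (y j)) = 0}"
  have restrict_sum: "(\<Sum>j<N. smul (c j) (restrict y {..<N} j)) = (\<Sum>j<N. smul (c j) (y j))" for c y
    by (rule sum.cong) simp_all
  have "closedin PT D"
    unfolding PT_def D_def by (rule closedin_dependent_tuples)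
  then have "openin PT (topspace PT - D)"
    by (simp add: closedin_def)
  moreover have "topspace PT = extensional {..<N}"
    unfolding PT_def by (simp add: PiE_def)
  then have "restrict q {..<N} \<in> topspace PT - D"
    using indep restrict_sum unfolding D_def lin_indep_seq_def coeff_annulus_def by auto
  ultimately obtain \<epsilon> where \<epsilon>: "\<epsilon> > 0"
    "\<forall>y\<in>extensional {..<N}. (\<forall>j\<in>{..<N}. y j \<in> mcball (restrict q {..<N} j) \<epsilon>)
       \<longrightarrow> y \<in> topspace PT - D"
    using open_product_contains_uniform_mcball[of "{..<N}" "topspace PT - D" "restrict q {..<N}"]
    unfolding PT_def by blast
  show ?thesis
  proof (rule that[OF \<epsilon>(1)])
    fix y c assume y: "\<And>j. j < N \<Longrightarrow> d (q j) (y j) \<le> \<epsilon>" and c: "c \<in> coeff_annulus m N"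
    have "restrict y {..<N} \<notin> D"
      using \<epsilon>(2) y by simp
    then show "(\<Sum>j<N. smul (c j) (y j)) \<noteq> 0"
      using c restrict_sum unfolding D_def by auto
  qed
qed

end

locale Polish_module = metric_module d nr smul
  for d :: "'m::ab_group_add \<Rightarrow> 'm \<Rightarrow> real" and nr :: "'r::division_ring \<Rightarrow> real" and smul +
  assumes mcomplete: "mcomplete"
    and separable: "separable_space mtopology"
    and uncountable_dim: "uncountable_dim smul"
begin

definition countably_spanned :: "'m set \<Rightarrow> bool" where
  "countably_spanned A \<longleftrightarrow> (\<exists>C. countable C \<and> A \<subseteq> lin_span smul C)"

lemma countably_spanned_subset: "A \<subseteq> B \<Longrightarrow> countably_spanned B \<Longrightarrow> countably_spanned A"
  unfolding countably_spanned_def by blast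

lemma countably_spanned_lin_span: "countable C \<Longrightarrow> countably_spanned (lin_span smul C)"
  unfolding countably_spanned_def by blast

lemma countably_spanned_Union:
  assumes "countable \<U>" "\<And>U. U \<in> \<U> \<Longrightarrow> countably_spanned U"
  shows "countably_spanned (\<Union>\<U>)"
proof -
  have "\<forall>U\<in>\<U>. \<exists>C. countable C \<and> U \<subseteq> lin_span smul C"
    using assms(2) unfolding countably_spanned_def by blast
  then obtain C where C: "\<forall>U\<in>\<U>. countable (C U) \<and> U \<subseteq> lin_span smul (C U)"
    by (auto dest: bchoice)
  have "U \<subseteq> lin_span smul (\<Union>U\<in>\<U>. C U)" if "U \<in> \<U>" for U
  proof -
    have "lin_span smul (C U) \<subseteq> lin_span smul (\<Union>U\<in>\<U>. C U)"
      using that by (intro lin_span_mono) blast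
    then show ?thesis using C that by blast
  qed
  then have "\<Union>\<U> \<subseteq> lin_span smul (\<Union>U\<in>\<U>. C U)"
    by (rule Union_least)
  moreover have "countable (\<Union>U\<in>\<U>. C U)"
    using assms(1) C by simp
  ultimately show ?thesis
    unfolding countably_spanned_def by (intro exI[of _ "\<Union>U\<in>\<U>. C U"] conjI)
qed

definition thick_points :: "'m set" where
  "thick_points = {x. \<forall>U. openin mtopology U \<and> x \<in> U \<longrightarrow> \<not> countably_spanned U}"

lemma countably_spannedI:
  assumes "countable C" "U \<inter> thick_points \<subseteq> lin_span smul C"
  shows "countably_spanned U"
proof -
  obtain \<B> where \<B>: "countable \<B>"
    "\<forall>V x. openin mtopology V \<and> x \<in> V \<longrightarrow> (\<exists>W\<in>\<B>. x \<in> W \<and> W \<subseteq> V)"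
    using separable_imp_second_countable[OF separable] unfolding second_countable_def by auto
  define \<V> where "\<V> = insert (lin_span smul C) {W \<in> \<B>. countably_spanned W}"
  have "x \<in> \<Union>\<V>" if "x \<in> U" for x
  proof (cases "x \<in> thick_points")
    case True
    then show ?thesis using assms(2) that unfolding \<V>_def by blast
  next
    case False
    then obtain V where V: "openin mtopology V" "x \<in> V" "countably_spanned V"
      unfolding thick_points_def by blast
    then obtain W where "W \<in> \<B>" "x \<in> W" "W \<subseteq> V" using \<B>(2) by blast
    moreover have "countably_spanned W"
      using countably_spanned_subset[OF \<open>W \<subseteq> V\<close> V(3)] .
    ultimately show ?thesis unfolding \<V>_def by blast
  qed
  then have "U \<subseteq> \<Union>\<V>" by (rule subsetI)
  moreover have "countably_spanned (\<Union>\<V>)"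
  proof (rule countably_spanned_Union)
    show "countable \<V>" unfolding \<V>_def using \<B>(1) by simp
    show "countably_spanned V" if "V \<in> \<V>" for V
      using that countably_spanned_lin_span[OF assms(1)] unfolding \<V>_def by blast
  qed
  ultimately show ?thesis by (rule countably_spanned_subset)
qed

lemma thick_points_nonempty: "thick_points \<noteq> {}"
proof
  assume "thick_points = {}"
  then have "countably_spanned UNIV"
    by (intro countably_spannedI[of "{}"]) simp_all
  then show False
    unfolding countably_spanned_def using countable_lin_span_neq_UNIV[OF uncountable_dim] by blast
qed

lemma thick_points_not_in_countable_span:
  assumes "openin mtopology U" "U \<inter> thick_points \<noteq> {}" "countable C"
  shows "\<not> U \<inter> thick_points \<subseteq> lin_span smul C"
proof
  assume "U \<inter> thick_points \<subseteq> lin_span smul C"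
  with assms(3) have "countably_spanned U"
    by (rule countably_spannedI)
  then show False
    using assms(1,2) unfolding thick_points_def by blast
qed

lemma exists_lin_indep_thick_points:
  assumes "\<And>j. j < N \<Longrightarrow> openin mtopology (U j) \<and> U j \<inter> thick_points \<noteq> {}"
  shows "\<exists>q. (\<forall>j<N. q j \<in> U j \<inter> thick_points) \<and> lin_indep_seq smul N q"
  using assms
proof (induction N)
  case 0
  show ?case by (simp add: lin_indep_seq_def)
next
  case (Suc N)
  have "\<exists>q. (\<forall>j<N. q j \<in> U j \<inter> thick_points) \<and> lin_indep_seq smul N q"
    by (rule Suc.IH) (simp add: Suc.prems)
  then obtain q where q: "\<forall>j<N. q j \<in> U j \<inter> thick_points" "lin_indep_seq smul N q"
    by blast
  obtain z where z: "z \<in> U N \<inter> thick_points" "z \<notin> lin_span smul (q ` {..<N})"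
    using thick_points_not_in_countable_span[of "U N" "q ` {..<N}"] Suc.prems by blast
  have "lin_indep_seq smul N (q(N := z))"
    using q(2) by (subst lin_indep_seq_cong[of N _ q]) simp_all
  moreover have "(q(N := z)) ` {..<N} = q ` {..<N}" by auto
  ultimately have "lin_indep_seq smul (Suc N) (q(N := z))"
    using z(2) by (intro lin_indep_seq_Suc) simp_all
  moreover have "\<forall>j<Suc N. (q(N := z)) j \<in> U j \<inter> thick_points"
    using q(1) z(1) by (simp add: less_Suc_eq)
  ultimately show ?case by blast
qed

definition good_level :: "nat \<Rightarrow> (nat \<Rightarrow> 'm) \<Rightarrow> (nat \<Rightarrow> real) \<Rightarrow> bool" where
  "good_level n p r \<longleftrightarrow>
     (\<forall>j<2^n. p j \<in> thick_points \<and> 0 < r j \<and> r j \<le> (1/2)^n) \<and>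
     (\<forall>i<2^n. \<forall>j<2^n. i \<noteq> j \<longrightarrow> mcball (p i) (r i) \<inter> mcball (p j) (r j) = {}) \<and>
     (\<forall>y. \<forall>c\<in>coeff_annulus n (2^n).
        (\<forall>j<2^n. y j \<in> mcball (p j) (r j)) \<longrightarrow> (\<Sum>j<2^n. smul (c j) (y j)) \<noteq> 0)"

definition refines :: "nat \<Rightarrow> (nat \<Rightarrow> 'm) \<Rightarrow> (nat \<Rightarrow> real) \<Rightarrow> (nat \<Rightarrow> 'm) \<Rightarrow> (nat \<Rightarrow> real) \<Rightarrow> bool" where
  "refines n p r p' r' \<longleftrightarrow> (\<forall>j<2^Suc n. mcball (p' j) (r' j) \<subseteq> mcball (p (j div 2)) (r (j div 2)))"

lemma good_level_0:
  assumes "x \<in> thick_points"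
  shows "good_level 0 (\<lambda>_. x) (\<lambda>_. 1)"
  using assms unfolding good_level_def by (simp add: coeff_annulus_0)

lemma exists_lin_indep_children:
  assumes "good_level n p r"
  shows "\<exists>q. (\<forall>j<2^Suc n. q j \<in> mball (p (j div 2)) (r (j div 2) / 2) \<inter> thick_points)
    \<and> lin_indep_seq smul (2^Suc n) q"
proof (rule exists_lin_indep_thick_points)
  fix j :: nat assume "j < 2^Suc n"
  then have "j div 2 < 2^n" by (simp add: less_mult_imp_div_less power_Suc2)
  then have "p (j div 2) \<in> thick_points" "0 < r (j div 2)"
    using assms unfolding good_level_def by blast+
  then have "p (j div 2) \<in> mball (p (j div 2)) (r (j div 2) / 2) \<inter> thick_points"
    by simp
  moreover have "openin mtopology (mball (p (j div 2)) (r (j div 2) / 2))"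
    by simp
  ultimately show "openin mtopology (mball (p (j div 2)) (r (j div 2) / 2)) \<and>
      mball (p (j div 2)) (r (j div 2) / 2) \<inter> thick_points \<noteq> {}"
    by blast
qed

lemma refinesI:
  assumes "\<And>j. j < 2^Suc n \<Longrightarrow> q j \<in> mball (p (j div 2)) (r (j div 2) / 2)"
    and "\<And>j. j < 2^Suc n \<Longrightarrow> r' j \<le> r (j div 2) / 2"
  shows "refines n p r q r'"
  unfolding refines_def
proof (intro allI impI subsetI)
  fix j x assume j: "j < 2^Suc n" and x: "x \<in> mcball (q j) (r' j)"
  have "d (p (j div 2)) (q j) < r (j div 2) / 2"
    using assms(1)[OF j] by auto
  moreover have "d (q j) x \<le> r (j div 2) / 2"
    using x assms(2)[OF j] by auto
  ultimately show "x \<in> mcball (p (j div 2)) (r (j div 2))"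
    using triangle[of "p (j div 2)" "q j" x] by auto
qed

lemma good_level_refine:
  assumes "good_level n p r"
  obtains p' r' where "good_level (Suc n) p' r'" "refines n p r p' r'"
proof -
  define N :: nat where "N = 2 ^ Suc n"
  obtain q where q: "\<forall>j<N. q j \<in> mball (p (j div 2)) (r (j div 2) / 2) \<inter> thick_points"
    and indep: "lin_indep_seq smul N q"
    using exists_lin_indep_children[OF assms] unfolding N_def by blast
  obtain \<epsilon> where \<epsilon>: "\<epsilon> > 0"
    "\<And>y c. (\<And>j. j < N \<Longrightarrow> d (q j) (y j) \<le> \<epsilon>) \<Longrightarrow> c \<in> coeff_annulus (Suc n) N \<Longrightarrow>
      (\<Sum>j<N. smul (c j) (y j)) \<noteq> 0"
    by (rule lin_indep_seq_stable[OF indep, where m = "Suc n"]) blast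
  obtain \<delta> where \<delta>: "\<delta> > 0"
    "\<And>i j. i \<in> {..<N} \<Longrightarrow> j \<in> {..<N} \<Longrightarrow> i \<noteq> j \<Longrightarrow> mcball (q i) \<delta> \<inter> mcball (q j) \<delta> = {}"
    by (rule obtain_disjoint_mcballs[OF finite_lessThan lin_indep_seq_inj_on[OF indep]]) simp_all
  define r' where "r' j = min (min \<epsilon> \<delta>) (min (r (j div 2) / 2) ((1/2) ^ Suc n))" for j
  have r': "0 < r' j" "r' j \<le> \<epsilon>" "r' j \<le> \<delta>" "r' j \<le> r (j div 2) / 2" "r' j \<le> (1/2) ^ Suc n"
    if "j < N" for j
  proof -
    have "j div 2 < 2^n" using that unfolding N_def by (simp add: less_mult_imp_div_less power_Suc2)
    then have "0 < r (j div 2)" using assms unfolding good_level_def by blast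
    then show "0 < r' j" "r' j \<le> \<epsilon>" "r' j \<le> \<delta>" "r' j \<le> r (j div 2) / 2" "r' j \<le> (1/2) ^ Suc n"
      using \<epsilon>(1) \<delta>(1) unfolding r'_def by auto
  qed
  have "good_level (Suc n) q r'"
    unfolding good_level_def N_def[symmetric]
  proof (intro conjI allI impI ballI)
    fix j assume "j < N"
    then show "q j \<in> thick_points" "0 < r' j" "r' j \<le> (1/2) ^ Suc n"
      using q r' by auto
  next
    fix i j assume ij: "i < N" "j < N" "i \<noteq> j"
    have "mcball (q i) (r' i) \<subseteq> mcball (q i) \<delta>" "mcball (q j) (r' j) \<subseteq> mcball (q j) \<delta>"
      using r'(3) ij by (simp_all add: mcball_subset_concentric)
    then show "mcball (q i) (r' i) \<inter> mcball (q j) (r' j) = {}"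
      using \<delta>(2)[of i j] ij by auto
  next
    fix y c assume "c \<in> coeff_annulus (Suc n) N" "\<forall>j<N. y j \<in> mcball (q j) (r' j)"
    then show "(\<Sum>j<N. smul (c j) (y j)) \<noteq> 0"
      using \<epsilon>(2)[of y c] r'(2) by force
  qed
  moreover have "refines n p r q r'"
    using q r'(4) unfolding N_def by (intro refinesI) auto
  ultimately show ?thesis by (rule that)
qed

definition scheme :: "nat \<Rightarrow> (nat \<Rightarrow> 'm) \<times> (nat \<Rightarrow> real)" where
  "scheme = rec_nat (\<lambda>_. SOME x. x \<in> thick_points, \<lambda>_. 1)
     (\<lambda>n (p, r). SOME (p', r'). good_level (Suc n) p' r' \<and> refines n p r p' r')"

lemma scheme_Suc:
  assumes "good_level n (fst (scheme n)) (snd (scheme n))"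
  shows "good_level (Suc n) (fst (scheme (Suc n))) (snd (scheme (Suc n)))"
    and "refines n (fst (scheme n)) (snd (scheme n)) (fst (scheme (Suc n))) (snd (scheme (Suc n)))"
proof -
  obtain p r where pr: "scheme n = (p, r)" by (cases "scheme n")
  let ?P = "\<lambda>s. good_level (Suc n) (fst s) (snd s) \<and> refines n p r (fst s) (snd s)"
  have "good_level n p r" using assms pr by simp
  then obtain p' r' where "good_level (Suc n) p' r'" "refines n p r p' r'"
    by (rule good_level_refine) blast
  then have "?P (p', r')" by simp
  then have "?P (SOME s. ?P s)" by (rule someI)
  moreover have "scheme (Suc n) = (SOME s. ?P s)"
    using pr by (simp add: scheme_def case_prod_unfold)
  ultimately show "good_level (Suc n) (fst (scheme (Suc n))) (snd (scheme (Suc n)))"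
    and "refines n (fst (scheme n)) (snd (scheme n)) (fst (scheme (Suc n))) (snd (scheme (Suc n)))"
    using pr by simp_all
qed

lemma good_level_scheme: "good_level n (fst (scheme n)) (snd (scheme n))"
proof (induction n)
  case 0
  have "(SOME x. x \<in> thick_points) \<in> thick_points"
    using thick_points_nonempty by (simp add: some_in_eq)
  then show ?case by (simp add: scheme_def good_level_0)
next
  case (Suc n)
  then show ?case by (rule scheme_Suc(1))
qed

definition cell :: "nat \<Rightarrow> nat \<Rightarrow> 'm set" where
  "cell n j = mcball (fst (scheme n) j) (snd (scheme n) j)"

lemma closedin_cell: "closedin mtopology (cell n j)"
  by (simp add: cell_def)

lemma centre_in_cell:
  assumes "j < 2^n"
  shows "fst (scheme n) j \<in> cell n j"
proof -
  have "0 < snd (scheme n) j"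
    using good_level_scheme[of n] assms unfolding good_level_def by blast
  then show ?thesis by (simp add: cell_def)
qed

lemma cells_disjoint: "i < 2^n \<Longrightarrow> j < 2^n \<Longrightarrow> x \<in> cell n i \<Longrightarrow> x \<in> cell n j \<Longrightarrow> i = j"
  using good_level_scheme[of n] unfolding good_level_def cell_def by blast

lemma cells_lincomb_nonzero:
  "(\<And>j. j < 2^n \<Longrightarrow> y j \<in> cell n j) \<Longrightarrow> c \<in> coeff_annulus n (2^n) \<Longrightarrow> (\<Sum>j<2^n. smul (c j) (y j)) \<noteq> 0"
  using good_level_scheme[of n] unfolding good_level_def cell_def by blast

lemma cell_Suc_subset: "j < 2^Suc n \<Longrightarrow> cell (Suc n) j \<subseteq> cell n (j div 2)"
  using scheme_Suc(2)[OF good_level_scheme] unfolding refines_def cell_def by blast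

lemma cell_add_subset: "j < 2^(n + t) \<Longrightarrow> cell (n + t) j \<subseteq> cell n (j div 2^t)"
proof (induction t arbitrary: j)
  case (Suc t)
  have "cell (n + Suc t) j \<subseteq> cell (n + t) (j div 2)"
    using cell_Suc_subset[of j "n + t"] Suc.prems by simp
  also have "\<dots> \<subseteq> cell n (j div 2 div 2^t)"
    by (rule Suc.IH) (use Suc.prems in \<open>simp add: less_mult_imp_div_less\<close>)
  finally show ?case by (simp add: div_mult2_eq)
qed simp

lemma cell_dist_le: "j < 2^n \<Longrightarrow> x \<in> cell n j \<Longrightarrow> y \<in> cell n j \<Longrightarrow> d x y \<le> 2 * (1/2)^n"
proof -
  assume j: "j < 2^n" and x: "x \<in> cell n j" and y: "y \<in> cell n j"
  let ?p = "fst (scheme n) j" and ?r = "snd (scheme n) j"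
  have "?r \<le> (1/2)^n" using good_level_scheme[of n] j unfolding good_level_def by blast
  moreover have "d ?p x \<le> ?r" "d ?p y \<le> ?r" using x y unfolding cell_def by auto
  moreover have "d x y \<le> d x ?p + d ?p y" by (rule triangle) auto
  ultimately show ?thesis using commute[of x ?p] by linarith
qed

definition cantor_set :: "'m set" where
  "cantor_set = {x. \<forall>n. \<exists>j<2^n. x \<in> cell n j}"

lemma closedin_cantor_set: "closedin mtopology cantor_set"
proof -
  have "cantor_set = (\<Inter>n. \<Union>j<2^n. cell n j)"
    unfolding cantor_set_def by auto
  moreover have "closedin mtopology (\<Union>j<2^n. cell n j)" for n
    by (intro closedin_Union) (auto simp: closedin_cell)
  ultimately show ?thesis
    by (simp add: closedin_INT)
qed

lemma in_cantor_setI: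
  assumes j: "j < 2^n" and x: "\<And>t. x \<in> cell (n + t) (j * 2^t)"
  shows "x \<in> cantor_set"
proof -
  have "\<exists>i<2^l. x \<in> cell l i" for l
  proof (cases "n \<le> l")
    case True
    then have "2^l = 2^n * (2::nat)^(l - n)" by (simp add: power_add[symmetric])
    then have "j * 2^(l - n) < 2^l" using j by simp
    then show ?thesis using x[of "l - n"] True by auto
  next
    case False
    define t where "t = n - l"
    have nl: "n = l + t" using False unfolding t_def by simp
    have "x \<in> cell l (j div 2^t)"
      using cell_add_subset[of j l t] x[of 0] j nl by auto
    moreover have "j div 2^t < 2^l"
      using j nl by (simp add: less_mult_imp_div_less power_add)
    ultimately show ?thesis by blast
  qed
  then show ?thesis unfolding cantor_set_def by blast
qed

lemma cantor_set_meets_cell: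
  assumes j: "j < 2^n"
  obtains x where "x \<in> cantor_set" "x \<in> cell n j"
proof -
  define C where "C t = cell (n + t) (j * 2^t)" for t
  have jt: "j * 2^t < 2^(n + t)" for t
    using j by (simp add: power_add)
  have "\<exists>t a. C t \<subseteq> mcball a \<epsilon>" if \<epsilon>: "\<epsilon> > 0" for \<epsilon>
  proof -
    obtain t where t: "(1/2::real)^t < \<epsilon>"
      using real_arch_pow_inv[of \<epsilon> "1/2"] \<epsilon> by auto
    have "snd (scheme (n + t)) (j * 2^t) \<le> (1/2)^(n + t)"
      using good_level_scheme[of "n + t"] jt[of t] unfolding good_level_def by blast
    also have "\<dots> \<le> (1/2)^t" by (rule power_decreasing) simp_all
    finally have "C t \<subseteq> mcball (fst (scheme (n + t)) (j * 2^t)) \<epsilon>"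
      unfolding C_def cell_def using t by (intro mcball_subset_concentric) simp
    then show ?thesis by blast
  qed
  moreover have "closedin mtopology (C t)" "C t \<noteq> {}" for t
    unfolding C_def using closedin_cell centre_in_cell[OF jt] by auto
  moreover have "C (Suc t) \<subseteq> C t" for t
    using cell_Suc_subset[of "j * 2^Suc t" "n + t"] jt[of "Suc t"] unfolding C_def by simp
  then have "decseq C" by (simp add: decseq_Suc_iff)
  ultimately have "(\<forall>t. closedin mtopology (C t)) \<and> (\<forall>t. C t \<noteq> {}) \<and> decseq C \<and>
      (\<forall>\<epsilon>>0. \<exists>t a. C t \<subseteq> mcball a \<epsilon>)"
    by blast
  then have "\<Inter> (range C) \<noteq> {}"
    using mcomplete unfolding mcomplete_nest by blast
  then obtain x where x: "\<And>t. x \<in> C t" by blast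
  have "x \<in> cantor_set"
    using j x unfolding C_def by (rule in_cantor_setI)
  moreover have "x \<in> cell n j" using x[of 0] unfolding C_def by simp
  ultimately show ?thesis by (rule that)
qed

lemma perfect_set_cantor_set: "perfect_set mtopology cantor_set"
  unfolding perfect_set_def
proof (intro conjI closedin_cantor_set equalityI)
  show "mtopology derived_set_of cantor_set \<subseteq> cantor_set"
    using closedin_cantor_set by (simp add: closedin_contains_derived_set)
  show "cantor_set \<subseteq> mtopology derived_set_of cantor_set"
  proof
    fix x assume x: "x \<in> cantor_set"
    have "\<exists>y\<in>cantor_set. y \<noteq> x \<and> y \<in> mball x \<epsilon>" if \<epsilon>: "\<epsilon> > 0" for \<epsilon>
    proof -
      obtain n where n: "(1/2::real)^n < \<epsilon> / 2"
        using real_arch_pow_inv[of "\<epsilon> / 2" "1/2"] \<epsilon> by auto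
      obtain j where j: "j < 2^Suc n" "x \<in> cell (Suc n) j"
        using x unfolding cantor_set_def by blast
      define j' where "j' = (if even j then j + 1 else j - 1)"
      have "j < 2 * 2^n" using j(1) by simp
      then have j': "j' < 2^Suc n" "j' \<noteq> j" "j' div 2 = j div 2"
        unfolding j'_def power_Suc by presburger+
      obtain y where y: "y \<in> cantor_set" "y \<in> cell (Suc n) j'"
        using cantor_set_meets_cell[OF j'(1)] by blast
      have "y \<noteq> x" using cells_disjoint[OF j(1) j'(1)] j(2) y(2) j'(2) by auto
      moreover have "x \<in> cell n (j div 2)" "y \<in> cell n (j div 2)" "j div 2 < 2^n"
        using cell_Suc_subset[OF j(1)] cell_Suc_subset[OF j'(1)] j y j'(3) by auto
      then have "d x y \<le> 2 * (1/2)^n" by (intro cell_dist_le)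
      ultimately show ?thesis using y(1) n by auto
    qed
    then show "x \<in> mtopology derived_set_of cantor_set"
      unfolding metric_derived_set_of using x by auto
  qed
qed

definition cell_index :: "nat \<Rightarrow> 'm \<Rightarrow> nat" where
  "cell_index n x = (SOME j. j < 2^n \<and> x \<in> cell n j)"

lemma cell_index: "x \<in> cantor_set \<Longrightarrow> cell_index n x < 2^n \<and> x \<in> cell n (cell_index n x)"
  unfolding cell_index_def cantor_set_def by (rule someI_ex) blast

lemma eventually_cell_index_neq:
  assumes "x \<in> cantor_set" "y \<in> cantor_set" "x \<noteq> y"
  shows "eventually (\<lambda>n. cell_index n x \<noteq> cell_index n y) sequentially"
proof -
  have "0 < d x y" using assms(3) nonneg[of x y] zero[of x y] by force
  then obtain n0 where n0: "(1/2::real)^n0 < d x y / 2"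
    using real_arch_pow_inv[of "d x y / 2" "1/2"] by auto
  have "cell_index n x \<noteq> cell_index n y" if "n0 \<le> n" for n
  proof
    assume "cell_index n x = cell_index n y"
    then have "d x y \<le> 2 * (1/2)^n"
      using cell_index[OF assms(1), of n] cell_index[OF assms(2), of n]
      by (intro cell_dist_le[of "cell_index n x"]) auto
    moreover have "(1/2::real)^n \<le> (1/2)^n0" using that by (intro power_decreasing) simp_all
    ultimately show False using n0 by linarith
  qed
  then show ?thesis unfolding eventually_sequentially by blast
qed

lemma eventually_inj_on_cell_index:
  assumes "finite S" "S \<subseteq> cantor_set"
  shows "eventually (\<lambda>n. inj_on (cell_index n) S) sequentially"
proof -
  have "eventually (\<lambda>n. x \<noteq> y \<longrightarrow> cell_index n x \<noteq> cell_index n y) sequentially"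
    if "x \<in> S" "y \<in> S" for x y
  proof (cases "x = y")
    case False
    with that assms(2) have "eventually (\<lambda>n. cell_index n x \<noteq> cell_index n y) sequentially"
      by (intro eventually_cell_index_neq) auto
    then show ?thesis by (rule eventually_mono) simp
  qed simp
  then have "eventually (\<lambda>n. \<forall>x\<in>S. \<forall>y\<in>S. x \<noteq> y \<longrightarrow> cell_index n x \<noteq> cell_index n y) sequentially"
    using assms(1) by (intro eventually_ball_finite ballI) simp_all
  then show ?thesis
    unfolding inj_on_def by (rule eventually_mono) blast
qed

lemma lincomb_distinct_cells_nonzero:
  assumes "finite S" "inj_on I S" "\<And>x. x \<in> S \<Longrightarrow> I x < 2^n \<and> x \<in> cell n (I x)"
    and "\<And>x. x \<in> S \<Longrightarrow> nr (c x) \<le> n" "x0 \<in> S" "1 / n \<le> nr (c x0)" "c x0 \<noteq> 0"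
  shows "(\<Sum>x\<in>S. smul (c x) x) \<noteq> 0"
proof -
  define J where "J = the_inv_into S I"
  have J: "J (I x) = x" if "x \<in> S" for x
    unfolding J_def using assms(2) that by (rule the_inv_into_f_f)
  define y where "y j = (if j \<in> I ` S then J j else fst (scheme n) j)" for j
  define c' where "c' j = (if j \<in> I ` S then c (J j) else 0)" for j
  have "I ` S \<subseteq> {..<2^n}" using assms(3) by auto
  then have "(\<Sum>j<2^n. smul (c' j) (y j)) = (\<Sum>j\<in>I ` S. smul (c (J j)) (J j))"
    by (intro sum.mono_neutral_cong_right) (auto simp: c'_def y_def smul_zero_left)
  also have "\<dots> = (\<Sum>x\<in>S. smul (c x) x)"
    by (simp add: sum.reindex[OF assms(2)] J)
  finally have sum: "(\<Sum>j<2^n. smul (c' j) (y j)) = (\<Sum>x\<in>S. smul (c x) x)" .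
  have "y j \<in> cell n j" if "j < 2^n" for j
    using assms(3) J centre_in_cell[OF that] unfolding y_def by auto
  moreover have "c' \<in> coeff_annulus n (2^n)"
  proof -
    have "nr (c' j) \<le> n" for j
      using assms(4) J norm_eq_zero_iff[of 0] unfolding c'_def by auto
    moreover have "I x0 < 2^n" "c' (I x0) = c x0"
      using assms(3,5) J unfolding c'_def by auto
    ultimately show ?thesis
      unfolding coeff_annulus_def using assms(6,7) by auto
  qed
  ultimately show ?thesis
    using cells_lincomb_nonzero sum by metis
qed

lemma lin_indep_cantor_set: "lin_indep smul cantor_set"
  unfolding lin_indep_def
proof (intro allI impI ballI)
  fix S c x0 assume S: "finite S \<and> S \<subseteq> cantor_set \<and> (\<Sum>x\<in>S. smul (c x) x) = 0" and x0: "x0 \<in> S"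
  show "c x0 = 0"
  proof (rule ccontr)
    assume "c x0 \<noteq> 0"
    have "finite S" using S by blast
    then obtain m :: nat where m: "0 < m" "\<And>x. x \<in> S \<Longrightarrow> nr (c x) \<le> m" "1 / m \<le> nr (c x0)"
      by (rule obtain_coeff_bound[of S x0 c, OF _ x0 \<open>c x0 \<noteq> 0\<close>]) blast
    have "eventually (\<lambda>n. m \<le> n \<and> inj_on (cell_index n) S) sequentially"
      using S by (intro eventually_conj eventually_ge_at_top eventually_inj_on_cell_index) simp_all
    then obtain n where n: "m \<le> n" "inj_on (cell_index n) S"
      unfolding eventually_sequentially by blast
    have "1 / n \<le> nr (c x0)"
      using m(1,3) n(1) by (smt (verit) frac_le of_nat_0_less_iff of_nat_mono)
    moreover have "\<And>x. x \<in> S \<Longrightarrow> nr (c x) \<le> n"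
      using m(2) n(1) by (meson of_nat_le_iff order_trans)
    ultimately have "(\<Sum>x\<in>S. smul (c x) x) \<noteq> 0"
      using S x0 n(2) cell_index \<open>c x0 \<noteq> 0\<close> by (intro lincomb_distinct_cells_nonzero) auto
    then show False using S by simp
  qed
qed

end

theorem corollary5p2:
  fixes nr :: "'r::division_ring \<Rightarrow> real"
    and smul :: "'r \<Rightarrow> 'm::ab_group_add \<Rightarrow> 'm"
    and T :: "'m topology"
  assumes "proper_ring_norm nr"
    and "topological_left_module nr smul T"
    and "Polish_space T"
    and "uncountable_dim smul"
  shows "\<exists>P. P \<noteq> {} \<and> perfect_set T P \<and> lin_indep smul P"
proof -
  obtain M d where Md: "Metric_space M d" "Metric_space.mcomplete M d" "T = Metric_space.mtopology M d"
    using assms(3) unfolding Polish_space_def completely_metrizable_space_def by blast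
  have "M = UNIV"
    using assms(2) Md Metric_space.topspace_mtopology unfolding topological_left_module_def by metis
  then interpret Polish_module d nr smul
    using Md assms unfolding Polish_space_def
    by (simp add: Polish_module_def Polish_module_axioms_def metric_module_def metric_module_axioms_def)
  obtain x where "x \<in> cantor_set"
    using cantor_set_meets_cell[of 0 0] by auto
  then show ?thesis
    using lin_indep_cantor_set perfect_set_cantor_set Md(3) \<open>M = UNIV\<close> by blast
qed

end
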